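(* Let $f$ be a transcendental meromorphic function projectable via $\exp_1$, and $g$ its exponential projection. Then $\mathcal{E}(g)\cap\mathbb{C}^*=\exp_1(f^{-1}(\infty))$. If $f$ is not entire, then $f$ has infinitely many poles and $\mathcal{E}(g)\cap\mathbb{C}^*\neq\emptyset$.
   Context: $\exp_1(z)=e^{2\pi iz}$; $f$ is projectable via $\exp_1$ if there is $g$ (its exponential projection) with $g\circ\exp_1=\exp_1\circ f$ wherever defined. $\mathcal{E}(g)\subset\widehat{\mathbb{C}}$ denotes the set of essential singularities of $g$, i.e. $g$ is meromorphic on $\widehat{\mathbb{C}}\setminus\mathcal{E}(g)$ and on no larger set. *)

theory Defs
  imports "HOL-Complex_Analysis.Complex_Analysis" "HOL-Computational_Algebra.Polynomial"
begin

definition exp1 :: "complex \<Rightarrow> complex" where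
  "exp1 z = exp (2 * of_real pi * \<i> * z)"

definition rational_function :: "(complex \<Rightarrow> complex) \<Rightarrow> bool" where
  "rational_function f \<longleftrightarrow>
     (\<exists>p q :: complex poly. q \<noteq> 0 \<and> (\<forall>z. poly q z \<noteq> 0 \<longrightarrow> f z = poly p z / poly q z))"

definition transcendental_meromorphic :: "(complex \<Rightarrow> complex) \<Rightarrow> bool" where
  "transcendental_meromorphic f \<longleftrightarrow> f nicely_meromorphic_on UNIV \<and> \<not> rational_function f"

definition exp_projection :: "(complex \<Rightarrow> complex) \<Rightarrow> (complex \<Rightarrow> complex) \<Rightarrow> bool" where
  "exp_projection f g \<longleftrightarrow> (\<forall>z. \<not> is_pole f z \<longrightarrow> g (exp1 z) = exp1 (f z))"

text \<open>Finite essential singularities of g (the part of E(g) in the complex plane):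
  points in no neighbourhood of which g is meromorphic.\<close>
definition ess_sings_finite :: "(complex \<Rightarrow> complex) \<Rightarrow> complex set" where
  "ess_sings_finite g = {w. \<not> g meromorphic_on {w}}"

end

theory Submission
  imports Defs
begin

text \<open>Near a pole \<open>z\<^sub>0\<close> of \<open>f\<close>, the function \<open>1/f\<close> is an open map vanishing at \<open>z\<^sub>0\<close>,
  so \<open>f\<close> takes every value \<open>t + n\<close> with \<open>n\<close> large, and \<open>exp\<^sub>1 \<circ> f\<close> takes every nonzero value,
  in particular \<open>1\<close> and \<open>-1\<close>, in every punctured neighbourhood of \<open>z\<^sub>0\<close>. As \<open>exp\<^sub>1\<close> is locally
  injective and \<open>g \<circ> exp\<^sub>1 = exp\<^sub>1 \<circ> f\<close>, the function \<open>g\<close> then has neither a limit nor a pole at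
  \<open>exp\<^sub>1 z\<^sub>0\<close>. Near the image of a non-pole, \<open>g = exp\<^sub>1 \<circ> f \<circ> L\<close> for a local branch \<open>L\<close> of the
  inverse of \<open>exp\<^sub>1\<close>, so \<open>g\<close> is holomorphic there. Finally \<open>exp\<^sub>1 \<circ> f\<close> is 1-periodic off the
  poles; if \<open>z\<^sub>0 + 1\<close> were not a pole, \<open>exp\<^sub>1 (f (z + 1))\<close> would be continuous at \<open>z\<^sub>0\<close> yet take
  both values \<open>1\<close> and \<open>-1\<close> arbitrarily close to it. Hence the poles are invariant under
  \<open>z \<mapsto> z + 1\<close>.\<close>

lemma exp1_add_of_int: "exp1 (z + of_int n) = exp1 z"
proof -
  have "exp1 (z + of_int n) = exp1 z * exp ((2 * of_int n * pi) * \<i>)"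
    unfolding exp1_def by (simp add: algebra_simps flip: exp_add)
  also have "exp ((2 * of_int n * pi) * \<i>) = 1"
    by (rule exp_integer_2pi) simp
  finally show ?thesis by simp
qed

lemma exp1_nonzero: "exp1 z \<noteq> 0"
  by (simp add: exp1_def)

lemma exp1_eq_iff: "exp1 z = exp1 w \<longleftrightarrow> (\<exists>n::int. z = w + of_int n)"
proof -
  have "exp1 z = exp1 w \<longleftrightarrow> (\<exists>n::int. 2 * of_real pi * \<i> * z = 2 * of_real pi * \<i> * (w + of_int n))"
    unfolding exp1_def exp_eq by (simp add: algebra_simps)
  also have "\<dots> \<longleftrightarrow> (\<exists>n::int. z = w + of_int n)"
    by (simp del: mult_cancel_left1)
  finally show ?thesis .
qed

lemma exp1_Ln: "w \<noteq> 0 \<Longrightarrow> exp1 (Ln w / (2 * of_real pi * \<i>)) = w"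
  by (simp add: exp1_def)

lemma exp1_0 [simp]: "exp1 0 = 1"
  by (simp add: exp1_def)

lemma exp1_half: "exp1 (1/2) = -1"
  by (simp add: exp1_def exp_pi_i')

lemma eventually_exp1_ne_at: "eventually (\<lambda>z. exp1 z \<noteq> exp1 z0) (at z0)"
proof -
  have "exp1 z \<noteq> exp1 z0" if "z \<noteq> z0" "dist z z0 < 1" for z
  proof
    assume "exp1 z = exp1 z0"
    then obtain n :: int where "z = z0 + of_int n"
      by (auto simp: exp1_eq_iff)
    with that show False
      by (simp add: dist_norm)
  qed
  then show ?thesis
    unfolding eventually_at by (intro exI[of _ 1]) auto
qed

lemma filterlim_exp1_at: "filterlim exp1 (at (exp1 z)) (at z)"
proof (rule filterlim_atI)
  show "(exp1 \<longlongrightarrow> exp1 z) (at z)"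
    unfolding exp1_def by (intro tendsto_intros)
qed (rule eventually_exp1_ne_at)

lemma exp1_local_inverse:
  assumes "exp1 z0 = w"
  obtains L where "L holomorphic_on ball w (norm w)" "L w = z0"
    "\<And>u. u \<in> ball w (norm w) \<Longrightarrow> exp1 (L u) = u"
proof -
  have "w \<noteq> 0"
    using assms exp1_nonzero by blast
  define L where "L u = z0 + Ln (u / w) / (2 * of_real pi * \<i>)" for u
  have "L w = z0"
    using \<open>w \<noteq> 0\<close> by (simp add: L_def)
  have "u / w \<notin> \<real>\<^sub>\<le>\<^sub>0" if "u \<in> ball w (norm w)" for u
  proof -
    have "u / w - 1 = (u - w) / w"
      using \<open>w \<noteq> 0\<close> by (simp add: field_simps)
    with that have "norm (u / w - 1) < 1"
      using \<open>w \<noteq> 0\<close> by (simp add: dist_norm norm_minus_commute norm_divide)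
    then have "Re (u / w) > 0"
      using abs_Re_le_cmod[of "u / w - 1"] by auto
    then show ?thesis
      by (auto simp: complex_nonpos_Reals_iff)
  qed
  then have "L holomorphic_on ball w (norm w)"
    unfolding L_def using \<open>w \<noteq> 0\<close> by (intro holomorphic_intros) auto
  moreover have "exp1 (L u) = u" if "u \<in> ball w (norm w)" for u
  proof -
    have "u \<noteq> 0"
      using that by (auto simp: dist_norm norm_minus_commute)
    have "exp1 (L u) = exp1 z0 * exp (Ln (u / w))"
      unfolding exp1_def L_def by (simp add: algebra_simps flip: exp_add)
    also have "\<dots> = u"
      using assms \<open>w \<noteq> 0\<close> \<open>u \<noteq> 0\<close> by simp
    finally show ?thesis .
  qed
  ultimately show thesis
    using that \<open>L w = z0\<close> by blast
qed

lemma not_essential_frequently_eq_imp_eq: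
  assumes "not_essential h z"
    and "\<exists>\<^sub>F x in at z. h x = a" and "\<exists>\<^sub>F x in at z. h x = b"
  shows "a = b"
proof -
  from assms(1) obtain c where "h \<midarrow>z\<rightarrow> c \<or> is_pole h z"
    unfolding not_essential_def by blast
  then have "\<forall>\<^sub>F x in at z. h x \<noteq> v" if "v \<noteq> c" for v
    unfolding is_pole_def
    using that by (auto intro: tendsto_imp_eventually_ne filterlim_at_infinity_imp_eventually_ne)
  then have "v = c" if "\<exists>\<^sub>F x in at z. h x = v" for v
    using that by (auto simp: frequently_def)
  with assms(2,3) show ?thesis
    by metis
qed

lemma nicely_meromorphic_on_isolated_singularity:
  assumes "f nicely_meromorphic_on A" "z \<in> A"
  shows "isolated_singularity_at f z"
  using assms unfolding nicely_meromorphic_on_def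
  by (meson empty_subsetI insert_subset meromorphic_on_isolated_singularity meromorphic_on_subset)

lemma pole_attains_large_values:
  assumes hol: "f holomorphic_on ball z0 r - {z0}" and pole: "is_pole f z0" and "r > 0"
  obtains R where "\<And>a. R < norm a \<Longrightarrow> \<exists>z\<in>ball z0 r - {z0}. f z = a"
proof -
  obtain d where d: "d > 0" "\<And>z. z \<noteq> z0 \<Longrightarrow> dist z z0 < d \<Longrightarrow> f z \<noteq> 0"
    using filterlim_at_infinity_imp_eventually_ne[OF pole[unfolded is_pole_def], of 0]
    unfolding eventually_at by blast
  define s where "s = min r d"
  have "s > 0" "ball z0 s \<subseteq> ball z0 r"
    using \<open>r > 0\<close> d(1) by (auto simp: s_def)
  have nonzero: "f z \<noteq> 0" if "z \<in> ball z0 s - {z0}" for z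
    using d(2)[of z] that by (auto simp: s_def dist_commute)
  define h where "h = (\<lambda>z. if z = z0 then 0 else inverse (f z))"
  have "h holomorphic_on ball z0 s"
    unfolding h_def
    by (rule is_pole_inverse_holomorphic[OF open_ball _ pole])
       (use hol nonzero \<open>ball z0 s \<subseteq> ball z0 r\<close> in \<open>auto intro: holomorphic_on_subset\<close>)
  moreover have "\<not> h constant_on ball z0 s"
  proof
    assume "h constant_on ball z0 s"
    moreover have z1: "z0 + of_real (s/2) \<in> ball z0 s - {z0}"
      using \<open>s > 0\<close> by (auto simp: dist_norm norm_minus_commute)
    ultimately have "h z0 = h (z0 + of_real (s/2))"
      using \<open>s > 0\<close> unfolding constant_on_def by force
    with z1 nonzero[OF z1] show False
      by (simp add: h_def)
  qed
  ultimately have "open (h ` ball z0 s)"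
    by (intro open_mapping_thm[of _ "ball z0 s"]) auto
  moreover have "0 \<in> h ` ball z0 s"
    using \<open>s > 0\<close> by (intro image_eqI[of _ _ z0]) (auto simp: h_def)
  ultimately obtain e where e: "e > 0" "ball 0 e \<subseteq> h ` ball z0 s"
    using open_contains_ball by blast
  have "\<exists>z\<in>ball z0 r - {z0}. f z = a" if "1 / e < norm a" for a
  proof -
    have "0 < 1 / e"
      using e(1) by simp
    with that have "norm a > 0"
      by linarith
    then have "a \<noteq> 0" "norm (inverse a) < e"
      using that e(1) by (auto simp: norm_divide field_simps)
    then obtain z where "z \<in> ball z0 s" "h z = inverse a"
      using e(2) by (auto simp: dist_norm)
    with \<open>a \<noteq> 0\<close> \<open>ball z0 s \<subseteq> ball z0 r\<close> show ?thesis
      by (auto simp: h_def split: if_splits)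
  qed
  then show ?thesis
    using that by blast
qed

lemma frequently_exp1_eq_at_pole:
  assumes "isolated_singularity_at f z0" and pole: "is_pole f z0"
  shows "\<exists>\<^sub>F z in at z0. \<not> is_pole f z \<and> exp1 (f z) = exp1 t"
  unfolding frequently_at
proof (intro allI impI)
  fix d :: real assume "d > 0"
  obtain r where "r > 0" and ana: "f analytic_on ball z0 r - {z0}"
    using assms(1) unfolding isolated_singularity_at_def by blast
  define s where "s = min r d"
  have "s > 0"
    using \<open>r > 0\<close> \<open>d > 0\<close> by (simp add: s_def)
  have "f holomorphic_on ball z0 s - {z0}"
    by (intro analytic_imp_holomorphic analytic_on_subset[OF ana]) (auto simp: s_def)
  then obtain R where R: "\<And>a. R < norm a \<Longrightarrow> \<exists>z\<in>ball z0 s - {z0}. f z = a"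
    using pole_attains_large_values pole \<open>s > 0\<close> by metis
  obtain n :: nat where "R + norm t < real n"
    using reals_Archimedean2 by blast
  moreover have "real n - norm t \<le> norm (t + of_nat n)"
    using norm_diff_ineq[of "of_nat n :: complex" t] by (simp add: add.commute)
  ultimately obtain z where z: "z \<in> ball z0 s - {z0}" "f z = t + of_nat n"
    using R[of "t + of_nat n"] by force
  have "f analytic_on {z}"
    using z(1) by (intro analytic_on_subset[OF ana]) (auto simp: s_def)
  then have "\<not> is_pole f z"
    by (rule analytic_at_imp_no_pole)
  moreover have "exp1 (f z) = exp1 t"
    using exp1_add_of_int[of t "int n"] by (simp add: z(2))
  ultimately show "\<exists>z\<in>UNIV. z \<noteq> z0 \<and> dist z z0 < d \<and> \<not> is_pole f z \<and> exp1 (f z) = exp1 t"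
    using z(1) by (auto simp: s_def dist_commute)
qed

lemma exp_projection_analytic_at:
  assumes proj: "exp_projection f g" and "f analytic_on {z0}"
  shows "g analytic_on {exp1 z0}"
proof -
  define w where "w = exp1 z0"
  obtain L where L: "L holomorphic_on ball w (norm w)" "L w = z0"
    "\<And>u. u \<in> ball w (norm w) \<Longrightarrow> exp1 (L u) = u"
    using exp1_local_inverse w_def by metis
  obtain r where "r > 0" and hol_f: "f holomorphic_on ball z0 r"
    using assms(2) analytic_at_ball by blast
  define V where "V = ball w (norm w) \<inter> L -` ball z0 r"
  have "open V"
    unfolding V_def using holomorphic_on_imp_continuous_on[OF L(1)]
    by (intro continuous_open_preimage) auto
  have "w \<in> V"
    using L(2) \<open>r > 0\<close> exp1_nonzero by (simp add: V_def w_def)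
  have "L holomorphic_on V" "f holomorphic_on L ` V"
    using L(1) hol_f by (auto simp: V_def intro: holomorphic_on_subset)
  then have "(\<lambda>u. exp1 (f (L u))) holomorphic_on V"
    unfolding exp1_def using holomorphic_on_compose[unfolded o_def]
    by (intro holomorphic_intros) blast
  moreover have "exp1 (f (L u)) = g u" if "u \<in> V" for u
  proof -
    have "\<not> is_pole f (L u)"
      using that by (intro not_is_pole_holomorphic[OF open_ball _ hol_f]) (auto simp: V_def)
    then have "g (exp1 (L u)) = exp1 (f (L u))"
      using proj by (simp add: exp_projection_def)
    with L(3) that show ?thesis
      by (simp add: V_def)
  qed
  ultimately have "g holomorphic_on V"
    by (rule holomorphic_transform)
  with \<open>open V\<close> \<open>w \<in> V\<close> show ?thesis
    unfolding w_def analytic_at by blast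
qed

lemma exp_projection_not_meromorphic_at_pole:
  assumes "exp_projection f g" "isolated_singularity_at f z0" "is_pole f z0"
  shows "\<not> g meromorphic_on {exp1 z0}"
proof
  assume "g meromorphic_on {exp1 z0}"
  then have ne: "not_essential g (exp1 z0)"
    by (simp add: meromorphic_at_iff)
  have freq: "\<exists>\<^sub>F u in at (exp1 z0). g u = exp1 t" for t
  proof -
    have "\<exists>\<^sub>F z in at z0. g (exp1 z) = exp1 t"
      using frequently_exp1_eq_at_pole[OF assms(2,3), of t]
      by (rule frequently_elim1) (use assms(1) in \<open>auto simp: exp_projection_def\<close>)
    then show ?thesis
      using eventually_compose_filterlim[OF _ filterlim_exp1_at] unfolding frequently_def by blast
  qed
  have "exp1 0 = exp1 (1/2)"
    by (rule not_essential_frequently_eq_imp_eq[OF ne freq freq])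
  then show False
    by (simp add: exp1_half)
qed

lemma exp_projection_exp1_comp_periodic:
  assumes "exp_projection f g" "\<not> is_pole f z" "\<not> is_pole f (z + 1)"
  shows "exp1 (f (z + 1)) = exp1 (f z)"
  using assms exp1_add_of_int[of z 1] unfolding exp_projection_def by (metis of_int_1)

lemma exp_projection_is_pole_add_1:
  assumes nm: "f nicely_meromorphic_on UNIV" and proj: "exp_projection f g"
    and pole: "is_pole f z0"
  shows "is_pole f (z0 + 1)"
proof (rule ccontr)
  assume "\<not> is_pole f (z0 + 1)"
  then have "f analytic_on {z0 + 1}"
    using nicely_meromorphic_on_imp_analytic_at[OF nm] by blast
  then obtain r where "r > 0" and hol: "f holomorphic_on ball (z0 + 1) r"
    using analytic_at_ball by blast
  define h where "h z = exp1 (f (z + 1))" for z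
  have "isCont (\<lambda>z. f (z + 1)) z0"
    using analytic_at_imp_isCont[OF \<open>f analytic_on {z0 + 1}\<close>]
    by (simp add: isCont_o2[where f = "\<lambda>z. z + 1" and a = z0 and g = f])
  then have "isCont h z0"
    unfolding h_def exp1_def by (intro continuous_intros)
  then have ne: "not_essential h z0"
    unfolding isCont_def by blast
  have ev: "\<forall>\<^sub>F z in at z0. \<not> is_pole f (z + 1)"
    unfolding eventually_at using \<open>r > 0\<close>
    by (intro exI[of _ r])
      (auto intro!: not_is_pole_holomorphic[OF open_ball _ hol] simp: dist_norm norm_minus_commute)
  have iso: "isolated_singularity_at f z0"
    using nm by (simp add: nicely_meromorphic_on_isolated_singularity)
  have freq: "\<exists>\<^sub>F z in at z0. h z = exp1 t" for t
  proof -
    have "\<exists>\<^sub>F z in at z0. (\<not> is_pole f z \<and> exp1 (f z) = exp1 t) \<and> \<not> is_pole f (z + 1)"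
      by (rule frequently_eventually_frequently[OF frequently_exp1_eq_at_pole[OF iso pole] ev])
    then show ?thesis
      by (rule frequently_elim1) (auto simp: h_def exp_projection_exp1_comp_periodic[OF proj])
  qed
  have "exp1 0 = exp1 (1/2)"
    by (rule not_essential_frequently_eq_imp_eq[OF ne freq freq])
  then show False
    by (simp add: exp1_half)
qed

lemma exp_projection_is_pole_add_nat:
  assumes "f nicely_meromorphic_on UNIV" "exp_projection f g" "is_pole f z0"
  shows "is_pole f (z0 + of_nat n)"
proof (induction n)
  case (Suc n)
  then show ?case
    using exp_projection_is_pole_add_1[OF assms(1,2) Suc] by (simp add: add_ac)
qed (simp add: assms(3))

lemma exp_projection_infinite_poles:
  assumes "f nicely_meromorphic_on UNIV" "exp_projection f g" "is_pole f z0"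
  shows "infinite {z. is_pole f z}"
proof -
  have "range (\<lambda>n::nat. z0 + of_nat n) \<subseteq> {z. is_pole f z}"
    using exp_projection_is_pole_add_nat[OF assms] by auto
  moreover have "infinite (range (\<lambda>n::nat. z0 + of_nat n))"
    by (rule range_inj_infinite) (auto simp: inj_on_def)
  ultimately show ?thesis
    using infinite_super by blast
qed

lemma exp_projection_ess_sings_finite:
  assumes nm: "f nicely_meromorphic_on UNIV" and proj: "exp_projection f g"
  shows "ess_sings_finite g - {0} = exp1 ` {z. is_pole f z}"
proof (intro equalityI subsetI)
  fix w assume w: "w \<in> ess_sings_finite g - {0}"
  define z0 where "z0 = Ln w / (2 * of_real pi * \<i>)"
  have "exp1 z0 = w"
    using w by (simp add: z0_def exp1_Ln)
  moreover have "is_pole f z0"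
  proof (rule ccontr)
    assume "\<not> is_pole f z0"
    then have "g analytic_on {exp1 z0}"
      by (intro exp_projection_analytic_at[OF proj] nicely_meromorphic_on_imp_analytic_at[OF nm]) auto
    with w \<open>exp1 z0 = w\<close> show False
      by (auto simp: ess_sings_finite_def dest: analytic_on_imp_meromorphic_on)
  qed
  ultimately show "w \<in> exp1 ` {z. is_pole f z}"
    by blast
next
  fix w assume "w \<in> exp1 ` {z. is_pole f z}"
  then obtain z0 where "is_pole f z0" "w = exp1 z0"
    by blast
  then show "w \<in> ess_sings_finite g - {0}"
    using exp_projection_not_meromorphic_at_pole[OF proj] exp1_nonzero
      nicely_meromorphic_on_isolated_singularity[OF nm]
    by (auto simp: ess_sings_finite_def)
qed

theorem proposition3p1:
  fixes f g :: "complex \<Rightarrow> complex"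
  assumes "transcendental_meromorphic f"
    and "exp_projection f g"
  shows "ess_sings_finite g - {0} = exp1 ` {z. is_pole f z} \<and>
         (\<not> f holomorphic_on UNIV \<longrightarrow>
            infinite {z. is_pole f z} \<and> ess_sings_finite g - {0} \<noteq> {})"
proof -
  have nm: "f nicely_meromorphic_on UNIV"
    using assms(1) by (simp add: transcendental_meromorphic_def)
  note ess_sings = exp_projection_ess_sings_finite[OF nm assms(2)]
  moreover have "infinite {z. is_pole f z} \<and> ess_sings_finite g - {0} \<noteq> {}"
    if nonentire: "\<not> f holomorphic_on UNIV"
  proof -
    obtain z0 where "is_pole f z0"
      using nonentire nicely_meromorphic_without_singularities[OF nm] analytic_imp_holomorphic by blast
    then show ?thesis
      using exp_projection_infinite_poles[OF nm assms(2)] ess_sings by blast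
  qed
  ultimately show ?thesis
    by blast
qed

end
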